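(* Fix an arbitrary execution of Algorithm $\mathrm{tree}(G)$ on $G$, and let $r$ be the rank defined in the context. Then every vertex $u$ of $G$ has at most one neighbor $v$ in $G$ with $r(u)<r(v)$.
   Context: $G$ is a finite connected simple undirected graph containing a vertex $a$ with $d_G(a)\ge 2$. For a subtree $T$ of $G$ and a vertex $u$ of $T$: - $V_T(u)$ is the set of vertices $v\in V(G)\setminus V(T)$ with $uv\in E(G)$. - $E_T(u)$ is the set of edges $uv$ of $G$ with $v\in V_T(u)$. - If $|V_T(u)|=1$, then $v_T(u)$ denotes the unique vertex of $V_T(u)$. Three sets of vertices of $T$ are defined: - $W_2(T)=\{u\in V(T): |V_T(u)|\ge 2\}$. - $W_1(T)=\{u\in V(T): |V_T(u)|=1,\ |V_{T\cup E_T(u)}(v_T(u))|\ge 2\}$. - $W_0(T)=\{u\in V(T): |V_T(u)|=1,\ |V_{T\cup E_T(u)}(v_T(u))|\le 1\}$. Algorithm $\mathrm{tree}(G)$ runs as follows. 1. Start with $T=\{a\}$. 2. While $V(T)\ne V(G)$: - If $W_2(T)\ne\emptyset$, pick an arbitrary $u\in W_2(T)$. - Else, if $W_1(T)\neq\emptyset$, pick an arbitrary $u\in W_1(T)$. - Else, let $u$ be the vertex of $W_0(T)$ that joined $V(T)$ most recently. - Set $T:=T\cup E_T(u)$ ("expand $T$ at $u$"). 3. Return $T$. Now fix an execution and let $T$ be the returned spanning tree, rooted at $a$. For $v\ne a$, let $p(v)$ be the parent of $v$ in $T$. For each vertex $u$ with $d_T(u)\ge 2$, let $T_u$ be the tree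 just before the (unique) expansion at $u$. The rank $r:V(G)\to\mathbb{Z}$ is defined by $r(a)=1$ and, for each edge $uv$ of $T$ with $u=p(v)$: - $r(v)=r(u)$ if $u\in W_2(T_u)$; - $r(v)=1+\max_{w\in V(T_u)} r(w)$ otherwise. *)

theory Defs
  imports Main
begin

definition simple_graph :: "'a set \<Rightarrow> ('a \<Rightarrow> 'a \<Rightarrow> bool) \<Rightarrow> bool" where
  "simple_graph V E \<longleftrightarrow> finite V \<and> (\<forall>u v. E u v \<longrightarrow> u \<in> V \<and> v \<in> V)
     \<and> (\<forall>u v. E u v \<longrightarrow> E v u) \<and> (\<forall>u. \<not> E u u)"

definition connected_graph :: "'a set \<Rightarrow> ('a \<Rightarrow> 'a \<Rightarrow> bool) \<Rightarrow> bool" where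
  "connected_graph V E \<longleftrightarrow> V \<noteq> {} \<and> (\<forall>u\<in>V. \<forall>v\<in>V. E\<^sup>*\<^sup>* u v)"

text \<open>A subtree grown by the algorithm is determined by its vertex set S
  (every new vertex is attached to the vertex at which the tree is expanded).
  V_T(u) for T with vertex set S:\<close>
definition VT :: "'a set \<Rightarrow> ('a \<Rightarrow> 'a \<Rightarrow> bool) \<Rightarrow> 'a set \<Rightarrow> 'a \<Rightarrow> 'a set" where
  "VT V E S u = {v \<in> V - S. E u v}"

definition W2 :: "'a set \<Rightarrow> ('a \<Rightarrow> 'a \<Rightarrow> bool) \<Rightarrow> 'a set \<Rightarrow> 'a set" where
  "W2 V E S = {u \<in> S. card (VT V E S u) \<ge> 2}"

definition W1 :: "'a set \<Rightarrow> ('a \<Rightarrow> 'a \<Rightarrow> bool) \<Rightarrow> 'a set \<Rightarrow> 'a set" where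
  "W1 V E S = {u \<in> S. card (VT V E S u) = 1 \<and>
      card (VT V E (S \<union> VT V E S u) (the_elem (VT V E S u))) \<ge> 2}"

definition W0 :: "'a set \<Rightarrow> ('a \<Rightarrow> 'a \<Rightarrow> bool) \<Rightarrow> 'a set \<Rightarrow> 'a set" where
  "W0 V E S = {u \<in> S. card (VT V E S u) = 1 \<and>
      card (VT V E (S \<union> VT V E S u) (the_elem (VT V E S u))) \<le> 1}"

text \<open>The execution is recorded as the list us of vertices at which the tree is
  expanded, in order. tstate i is the vertex set of the tree after i expansions.\<close>
fun tstate :: "'a set \<Rightarrow> ('a \<Rightarrow> 'a \<Rightarrow> bool) \<Rightarrow> 'a \<Rightarrow> 'a list \<Rightarrow> nat \<Rightarrow> 'a set" where
  "tstate V E a us 0 = {a}"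
| "tstate V E a us (Suc i) = tstate V E a us i \<union> VT V E (tstate V E a us i) (us ! i)"

definition join_time :: "'a set \<Rightarrow> ('a \<Rightarrow> 'a \<Rightarrow> bool) \<Rightarrow> 'a \<Rightarrow> 'a list \<Rightarrow> 'a \<Rightarrow> nat" where
  "join_time V E a us v = (LEAST j. v \<in> tstate V E a us j)"

definition tree_execution :: "'a set \<Rightarrow> ('a \<Rightarrow> 'a \<Rightarrow> bool) \<Rightarrow> 'a \<Rightarrow> 'a list \<Rightarrow> bool" where
  "tree_execution V E a us \<longleftrightarrow>
     (\<forall>i < length us.
        (let S = tstate V E a us i; u = us ! i in
          S \<noteq> V \<and>
          (if W2 V E S \<noteq> {} then u \<in> W2 V E S
           else if W1 V E S \<noteq> {} then u \<in> W1 V E S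
           else u \<in> W0 V E S \<and>
                (\<forall>w \<in> W0 V E S. join_time V E a us w \<le> join_time V E a us u))))
     \<and> tstate V E a us (length us) = V"

fun rank_upto :: "'a set \<Rightarrow> ('a \<Rightarrow> 'a \<Rightarrow> bool) \<Rightarrow> 'a \<Rightarrow> 'a list \<Rightarrow> nat \<Rightarrow> 'a \<Rightarrow> int" where
  "rank_upto V E a us 0 = (\<lambda>v. 1)"
| "rank_upto V E a us (Suc i) =
     (let S = tstate V E a us i; u = us ! i; r = rank_upto V E a us i in
       (\<lambda>v. if v \<in> VT V E S u then
               (if u \<in> W2 V E S then r u else 1 + Max (r ` S))
             else r v))"

definition rank :: "'a set \<Rightarrow> ('a \<Rightarrow> 'a \<Rightarrow> bool) \<Rightarrow> 'a \<Rightarrow> 'a list \<Rightarrow> 'a \<Rightarrow> int" where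
  "rank V E a us = rank_upto V E a us (length us)"

end

theory Submission
  imports Defs
begin

text \<open>The rank handed out at an expansion is never below the current maximum rank,
  because the following invariant is preserved: every vertex of \<open>W\<^sub>2(T)\<close> carries
  the maximum rank of \<open>T\<close>. Hence ranks do not decrease in the order in which vertices
  join the tree. So if \<open>u\<close> has a neighbour \<open>v\<close> with \<open>r(u) < r(v)\<close>, then \<open>u\<close> was
  already in \<open>T\<close> when \<open>v\<close> joined, and \<open>v\<close> was then the only vertex of \<open>V\<^sub>T(u)\<close>:
  otherwise \<open>u \<in> W\<^sub>2(T)\<close>, the expansion took place at a vertex of \<open>W\<^sub>2(T)\<close>, and
  \<open>v\<close> inherited the maximum rank \<open>r(u)\<close>. Of two such neighbours, the one that joined
  later was still outside \<open>T\<close> when the other one joined, so they coincide.\<close>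

lemma VT_subset: "VT V E S u \<subseteq> V - S"
  by (auto simp: VT_def)

lemma VT_antimono: "S \<subseteq> S' \<Longrightarrow> VT V E S' u \<subseteq> VT V E S u"
  by (auto simp: VT_def)

lemma finite_VT: "finite V \<Longrightarrow> finite (VT V E S u)"
  by (simp add: VT_def)

lemma W2_antimono:
  assumes "finite V" "S \<subseteq> S'" "x \<in> S" "x \<in> W2 V E S'"
  shows "x \<in> W2 V E S"
proof -
  have "card (VT V E S' x) \<le> card (VT V E S x)"
    using assms(1,2) by (intro card_mono finite_VT VT_antimono)
  then show ?thesis
    using assms(3,4) by (simp add: W2_def)
qed

locale tree_run =
  fixes V :: "'a set" and E :: "'a \<Rightarrow> 'a \<Rightarrow> bool" and a :: 'a and us :: "'a list"
begin

abbreviation T :: "nat \<Rightarrow> 'a set" where "T i \<equiv> tstate V E a us i"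
abbreviation r :: "nat \<Rightarrow> 'a \<Rightarrow> int" where "r i \<equiv> rank_upto V E a us i"
abbreviation attached :: "nat \<Rightarrow> 'a set" where "attached i \<equiv> VT V E (T i) (us ! i)"
abbreviation max_rank :: "nat \<Rightarrow> int" where "max_rank i \<equiv> Max (r i ` T i)"

definition attach_rank :: "nat \<Rightarrow> int" where
  "attach_rank i = (if us ! i \<in> W2 V E (T i) then r i (us ! i) else 1 + max_rank i)"

lemma a_in_T: "a \<in> T i"
  by (induction i) auto

lemma T_mono: "i \<le> j \<Longrightarrow> T i \<subseteq> T j"
  by (rule lift_Suc_mono_le[of T]) auto

lemma r_Suc_old: "x \<in> T i \<Longrightarrow> r (Suc i) x = r i x"
  using VT_subset[of V E "T i"] by (auto simp: Let_def)

lemma r_Suc_attached: "x \<in> attached i \<Longrightarrow> r (Suc i) x = attach_rank i"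
  by (simp add: Let_def attach_rank_def)

declare rank_upto.simps(2) [simp del]

lemma r_stable: "i \<le> j \<Longrightarrow> x \<in> T i \<Longrightarrow> r j x = r i x"
proof (induction j rule: dec_induct)
  case (step j)
  then show ?case
    using T_mono[of i j] r_Suc_old[of x j] by auto
qed simp

lemma first_attachment: "v \<in> T j \<Longrightarrow> v \<noteq> a \<Longrightarrow> \<exists>k<j. v \<notin> T k \<and> v \<in> attached k"
proof (induction j)
  case (Suc j)
  then show ?case
    by (cases "v \<in> T j") (auto intro: less_SucI)
qed simp

end

locale tree_execution_run = tree_run +
  assumes simple: "simple_graph V E" and a_in_V: "a \<in> V"
    and execution: "tree_execution V E a us"
begin

lemma finite_V: "finite V"
  using simple by (simp add: simple_graph_def)

lemma edge_vertices: "E u v \<Longrightarrow> u \<in> V \<and> v \<in> V"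
  using simple by (simp add: simple_graph_def)

lemma edge_irrefl: "E u v \<Longrightarrow> u \<noteq> v"
  using simple unfolding simple_graph_def by metis

lemma T_subset_V: "T i \<subseteq> V"
  by (induction i) (use a_in_V VT_subset[of V E] in auto)

lemma finite_T: "finite (T i)"
  using T_subset_V finite_V finite_subset by blast

lemma T_final: "T (length us) = V"
  using execution by (simp add: tree_execution_def)

lemma expansion_rule:
  assumes "i < length us"
  shows "if W2 V E (T i) \<noteq> {} then us ! i \<in> W2 V E (T i)
         else if W1 V E (T i) \<noteq> {} then us ! i \<in> W1 V E (T i)
         else us ! i \<in> W0 V E (T i) \<and>
           (\<forall>w \<in> W0 V E (T i). join_time V E a us w \<le> join_time V E a us (us ! i))"
  using execution assms by (simp add: tree_execution_def Let_def)

lemma expanded_in_W2: "i < length us \<Longrightarrow> W2 V E (T i) \<noteq> {} \<Longrightarrow> us ! i \<in> W2 V E (T i)"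
  using expansion_rule by simp

lemma attached_nonempty: "i < length us \<Longrightarrow> attached i \<noteq> {}"
  using expansion_rule[of i] by (auto simp: W2_def W1_def W0_def split: if_splits)

lemma r_le_max_rank: "x \<in> T i \<Longrightarrow> r i x \<le> max_rank i"
  using finite_T by (auto intro: Max_ge)

definition W2_at_max_rank :: "nat \<Rightarrow> bool" where
  "W2_at_max_rank i \<longleftrightarrow> (\<forall>x \<in> W2 V E (T i). r i x = max_rank i)"

lemma max_rank_le_attach_rank: "W2_at_max_rank i \<Longrightarrow> max_rank i \<le> attach_rank i"
  by (simp add: attach_rank_def W2_at_max_rank_def)

lemma max_rank_Suc:
  assumes "i < length us" "W2_at_max_rank i"
  shows "max_rank (Suc i) = attach_rank i"
proof -
  have "r (Suc i) ` T (Suc i) = r (Suc i) ` T i \<union> r (Suc i) ` attached i"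
    by (simp add: image_Un)
  also have "r (Suc i) ` T i = r i ` T i"
    using r_Suc_old by (auto simp: image_def)
  also have "r (Suc i) ` attached i = {attach_rank i}"
    using r_Suc_attached attached_nonempty[OF assms(1)] by auto
  finally have image_Suc: "r (Suc i) ` T (Suc i) = insert (attach_rank i) (r i ` T i)"
    by auto
  have "max_rank (Suc i) = max (attach_rank i) (max_rank i)"
    unfolding image_Suc using finite_T a_in_T by (subst Max_insert) auto
  then show ?thesis
    using max_rank_le_attach_rank[OF assms(2)] by simp
qed

lemma W2_at_max_rank_Suc:
  assumes "i < length us" "W2_at_max_rank i"
  shows "W2_at_max_rank (Suc i)"
  unfolding W2_at_max_rank_def
proof
  fix x assume x: "x \<in> W2 V E (T (Suc i))"
  show "r (Suc i) x = max_rank (Suc i)"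
  proof (cases "x \<in> T i")
    case True
    then have "x \<in> W2 V E (T i)"
      using W2_antimono[OF finite_V _ _ x] by simp
    moreover from this have "us ! i \<in> W2 V E (T i)"
      using expanded_in_W2[OF assms(1)] by blast
    ultimately show ?thesis
      using assms True r_Suc_old max_rank_Suc
      by (simp add: attach_rank_def W2_at_max_rank_def)
  next
    case False
    then have "x \<in> attached i"
      using x by (simp add: W2_def)
    then show ?thesis
      using assms r_Suc_attached max_rank_Suc by simp
  qed
qed

lemma W2_at_max_rank: "i \<le> length us \<Longrightarrow> W2_at_max_rank i"
proof (induction i)
  case 0
  show ?case
    by (simp add: W2_at_max_rank_def)
next
  case (Suc i)
  then show ?case
    using W2_at_max_rank_Suc by simp
qed

lemma max_rank_mono: "i \<le> j \<Longrightarrow> j \<le> length us \<Longrightarrow> max_rank i \<le> max_rank j"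
proof (induction j rule: dec_induct)
  case (step j)
  then show ?case
    using max_rank_Suc[of j] max_rank_le_attach_rank[of j] W2_at_max_rank[of j] by simp
qed simp

lemma rank_le_of_later:
  assumes y: "y \<in> T i" and v: "v \<in> V - T i"
  shows "r (length us) y \<le> r (length us) v"
proof -
  obtain k where k: "k < length us" "v \<notin> T k" "v \<in> attached k"
    using first_attachment[of v "length us"] T_final v a_in_T by blast
  have "\<not> Suc k \<le> i"
    using T_mono[of "Suc k" i] k v by auto
  then have "i \<le> k"
    by simp
  have "r (length us) y = r i y"
    using r_stable y \<open>i \<le> k\<close> k(1) by simp
  also have "\<dots> \<le> max_rank i"
    using r_le_max_rank y .
  also have "\<dots> \<le> max_rank k"
    using max_rank_mono \<open>i \<le> k\<close> k(1) by simp
  also have "\<dots> \<le> attach_rank k"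
    using max_rank_le_attach_rank W2_at_max_rank k(1) by simp
  also have "\<dots> = r (length us) v"
    using r_Suc_attached r_stable[of "Suc k" "length us" v] k by simp
  finally show ?thesis .
qed

lemma higher_neighbour_sole_outside:
  assumes uv: "E u v" and less: "r (length us) u < r (length us) v"
  shows "\<exists>k. v \<notin> T k \<and> VT V E (T k) u = {v}"
proof -
  have "u \<in> V" "v \<in> V" "u \<noteq> v"
    using edge_vertices edge_irrefl uv by auto
  have "v \<noteq> a"
    using rank_le_of_later[of v 0 u] \<open>u \<in> V\<close> \<open>u \<noteq> v\<close> less by auto
  then obtain k where k: "k < length us" "v \<notin> T k" "v \<in> attached k"
    using first_attachment[of v "length us"] T_final \<open>v \<in> V\<close> by blast
  have r_v: "r (length us) v = attach_rank k"
    using r_Suc_attached r_stable[of "Suc k" "length us" v] k by simp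
  have "u \<in> T k"
  proof (rule ccontr)
    assume "u \<notin> T k"
    show False
    proof (cases "u \<in> T (Suc k)")
      case True
      then show False
        using \<open>u \<notin> T k\<close> r_Suc_attached r_stable[of "Suc k" "length us" u] k less r_v by simp
    next
      case False
      then show False
        using rank_le_of_later[of v "Suc k" u] \<open>u \<in> V\<close> k less by simp
    qed
  qed
  have v_out: "v \<in> VT V E (T k) u"
    using k \<open>v \<in> V\<close> uv by (simp add: VT_def)
  have "u \<notin> W2 V E (T k)"
  proof
    assume "u \<in> W2 V E (T k)"
    then have "us ! k \<in> W2 V E (T k)" "r k u = max_rank k" "r k (us ! k) = max_rank k"
      using expanded_in_W2 W2_at_max_rank[of k] k(1) by (auto simp: W2_at_max_rank_def)
    then show False
      using r_v r_stable[of k "length us" u] \<open>u \<in> T k\<close> k(1) less by (simp add: attach_rank_def)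
  qed
  then have "card (VT V E (T k) u) \<le> Suc 0"
    using \<open>u \<in> T k\<close> by (simp add: W2_def)
  then have "VT V E (T k) u = {v}"
    using v_out card_le_Suc0_iff_eq[OF finite_VT[OF finite_V]] by blast
  with k show ?thesis by blast
qed

lemma card_higher_neighbours_le_1:
  "card {v \<in> V. E u v \<and> r (length us) u < r (length us) v} \<le> 1"
proof -
  let ?H = "{v \<in> V. E u v \<and> r (length us) u < r (length us) v}"
  have "v\<^sub>1 = v\<^sub>2" if v\<^sub>1: "v\<^sub>1 \<in> ?H" and v\<^sub>2: "v\<^sub>2 \<in> ?H" for v\<^sub>1 v\<^sub>2
  proof -
    obtain k\<^sub>1 where k\<^sub>1: "v\<^sub>1 \<notin> T k\<^sub>1" "VT V E (T k\<^sub>1) u = {v\<^sub>1}"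
      using higher_neighbour_sole_outside v\<^sub>1 by blast
    obtain k\<^sub>2 where k\<^sub>2: "v\<^sub>2 \<notin> T k\<^sub>2" "VT V E (T k\<^sub>2) u = {v\<^sub>2}"
      using higher_neighbour_sole_outside v\<^sub>2 by blast
    consider "k\<^sub>1 \<le> k\<^sub>2" | "k\<^sub>2 \<le> k\<^sub>1"
      by linarith
    then show ?thesis
    proof cases
      case 1
      then have "v\<^sub>2 \<in> VT V E (T k\<^sub>1) u"
        using T_mono k\<^sub>2 v\<^sub>2 by (auto simp: VT_def)
      then show ?thesis
        using k\<^sub>1 by simp
    next
      case 2
      then have "v\<^sub>1 \<in> VT V E (T k\<^sub>2) u"
        using T_mono k\<^sub>1 v\<^sub>1 by (auto simp: VT_def)
      then show ?thesis
        using k\<^sub>2 by simp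
    qed
  qed
  then show ?thesis
    using card_le_Suc0_iff_eq[of ?H] finite_V by auto
qed

end

theorem lemma2:
  fixes V :: "'a set" and E :: "'a \<Rightarrow> 'a \<Rightarrow> bool" and a :: 'a and us :: "'a list"
  assumes "simple_graph V E" and "connected_graph V E"
    and "a \<in> V" and "card {v. E a v} \<ge> 2"
    and "tree_execution V E a us"
  shows "\<forall>u \<in> V. card {v \<in> V. E u v \<and> rank V E a us u < rank V E a us v} \<le> 1"
proof -
  interpret tree_execution_run V E a us
    using assms by (simp add: tree_execution_run_def)
  show ?thesis
    using card_higher_neighbours_le_1 by (simp add: rank_def)
qed

end
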